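(* Let $n, m$ be positive integers and $\alpha \in (0,1)$. Form a random $m \times n$ array of zeros and ones in which each of the $mn$ entries is independently equal to $1$ with probability $\alpha$ and to $0$ with probability $1-\alpha$. Let $X$ be the number of deficient sets of three rows. Put $$p_n(\alpha) = (1-\alpha^3)^n + 3\bigl(1-\alpha^2(1-\alpha)\bigr)^n, \qquad \zeta(n) = \sqrt{\frac{2}{3e}}\left(\frac{1}{p_n(\alpha)}\right)^{1/2}.$$ If $m \le \zeta(n)$, then $\mathbb{P}(X=0) > 0$. Consequently, the largest number of rows in a $\mathcal{C}(n,2,3,A,1)$ partial covering array, with each row having expected weight $k=\alpha n$ in this random model, is at least $\zeta(n)$.
   Context: Let $A = \{(0,1,1),(1,0,1),(1,1,0),(1,1,1)\}$. A set of three rows of a $0$-$1$ array is called deficient if at least one of the four vectors in $A$ does not appear among the columns of the $3 \times n$ subarray formed by those three rows (in the sense that for some vector in $A$ no column, restricted to the three rows, equals it). A partial covering array $\mathcal{C}(n,2,3,A,1)$ is an $m\times n$ $0$-$1$ array such that for every choice of three rows, each vector of $A$ appears at least once among the columns of the selected rows; equivalently, no set of three rows is deficient. (Equivalently, viewing rows as subsets of an $n$-set, for any three rows $A',B',C'$ the sets $A'\cap B'\cap C'$, $A'\cap B'\cap C'^{c}$, $A'\cap B'^{c}\cap C'$, $A'^{c}\cap B'\cap C'$ are all nonempty.) *)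

theory Defs
  imports "HOL-Probability.Probability"
begin

text \<open>A 0-1 array with m rows and n columns is modelled as a function
  M :: nat \<times> nat \<Rightarrow> bool, where M (r, c) is the entry in row r < m,
  column c < n (True = 1, False = 0); entries outside the range are irrelevant.\<close>

definition vecA :: "(bool \<times> bool \<times> bool) set" where
  "vecA = {(False, True, True), (True, False, True), (True, True, False), (True, True, True)}"

definition deficient :: "(nat \<times> nat \<Rightarrow> bool) \<Rightarrow> nat \<Rightarrow> nat \<Rightarrow> nat \<Rightarrow> nat \<Rightarrow> bool" where
  "deficient M n i j k \<longleftrightarrow> (\<exists>v\<in>vecA. \<not> (\<exists>c<n. (M (i, c), M (j, c), M (k, c)) = v))"

definition deficient_sets :: "(nat \<times> nat \<Rightarrow> bool) \<Rightarrow> nat \<Rightarrow> nat \<Rightarrow> (nat \<times> nat \<times> nat) set" where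
  "deficient_sets M m n = {(i, j, k). i < j \<and> j < k \<and> k < m \<and> deficient M n i j k}"

definition num_deficient :: "(nat \<times> nat \<Rightarrow> bool) \<Rightarrow> nat \<Rightarrow> nat \<Rightarrow> nat" where
  "num_deficient M m n = card (deficient_sets M m n)"

definition is_PCA :: "(nat \<times> nat \<Rightarrow> bool) \<Rightarrow> nat \<Rightarrow> nat \<Rightarrow> bool" where
  "is_PCA M m n \<longleftrightarrow> (\<forall>i j k. i < j \<and> j < k \<and> k < m \<longrightarrow> \<not> deficient M n i j k)"

definition random_array :: "nat \<Rightarrow> nat \<Rightarrow> real \<Rightarrow> (nat \<times> nat \<Rightarrow> bool) pmf" where
  "random_array m n \<alpha> = Pi_pmf ({0..<m} \<times> {0..<n}) False (\<lambda>_. bernoulli_pmf \<alpha>)"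

definition p_n :: "nat \<Rightarrow> real \<Rightarrow> real" where
  "p_n n \<alpha> = (1 - \<alpha> ^ 3) ^ n + 3 * (1 - \<alpha> ^ 2 * (1 - \<alpha>)) ^ n"

definition zeta :: "nat \<Rightarrow> real \<Rightarrow> real" where
  "zeta n \<alpha> = sqrt (2 / (3 * exp 1)) * (1 / p_n n \<alpha>) powr (1/2)"

end

theory Submission
  imports Defs
begin

text \<open>Rather than the local lemma, we use the deletion method. Columns of the random array
  are independent, so by a union bound over the four vectors of A a fixed triple of rows is
  deficient with probability at most p_n. Hence a random array with 2m rows has at most
  C(2m,3) p_n \<le> 4 m^3 p_n < m deficient triples in expectation, the last inequality being
  m^2 p_n \<le> 2/(3e) together with e > 8/3. Deleting from a good outcome the last row of every
  deficient triple leaves at least m rows without deficient triples. Finally, for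
  0 < \<alpha> < 1 every array has positive probability, so P(X = 0) > 0.\<close>

lemma Pi_pmf_Times_conv_columns:
  assumes "finite A" "finite B"
  shows "Pi_pmf (A \<times> B) d p
         = map_pmf (\<lambda>C (a, b). C b a) (Pi_pmf B (\<lambda>_. d) (\<lambda>b. Pi_pmf A d (\<lambda>a. p (a, b))))"
proof (rule pmf_eqI)
  fix M :: "'a \<times> 'b \<Rightarrow> 'c"
  let ?T = "\<lambda>C (a, b). C b a"
  let ?columns = "Pi_pmf B (\<lambda>_. d) (\<lambda>b. Pi_pmf A d (\<lambda>a. p (a, b)))"
  have "pmf (Pi_pmf (A \<times> B) d p) M = pmf ?columns (\<lambda>b a. M (a, b))"
  proof (cases "\<forall>x. x \<notin> A \<times> B \<longrightarrow> M x = d")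
    case True
    have "pmf (Pi_pmf (A \<times> B) d p) M = (\<Prod>x\<in>A \<times> B. pmf (p x) (M x))"
      using True assms by (simp add: pmf_Pi)
    also have "\<dots> = (\<Prod>b\<in>B. \<Prod>a\<in>A. pmf (p (a, b)) (M (a, b)))"
      by (subst prod.swap) (simp add: prod.cartesian_product)
    also have "\<dots> = pmf ?columns (\<lambda>b a. M (a, b))"
      using True assms by (auto simp: pmf_Pi fun_eq_iff intro!: prod.cong)
    finally show ?thesis .
  next
    case False
    then obtain a b where ab: "(a, b) \<notin> A \<times> B" "M (a, b) \<noteq> d"
      by auto
    have "pmf ?columns (\<lambda>b a. M (a, b)) = 0"
    proof (cases "b \<in> B")
      case True
      with ab have "pmf (Pi_pmf A d (\<lambda>a. p (a, b))) (\<lambda>a. M (a, b)) = 0"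
        using assms by (auto simp: pmf_Pi)
      with True have "(\<Prod>b'\<in>B. pmf (Pi_pmf A d (\<lambda>a. p (a, b'))) (\<lambda>a. M (a, b'))) = 0"
        using assms by (intro prod_zero) auto
      then show ?thesis
        by (simp only: pmf_Pi [OF assms(2)] if_cancel)
    next
      case False
      with ab show ?thesis
        using assms by (auto simp: pmf_Pi fun_eq_iff)
    qed
    moreover have "pmf (Pi_pmf (A \<times> B) d p) M = 0"
      using False assms by (simp add: pmf_Pi) blast
    ultimately show ?thesis
      by simp
  qed
  also have "\<dots> = pmf (map_pmf ?T ?columns) (?T (\<lambda>b a. M (a, b)))"
    by (rule pmf_map_inj' [symmetric]) (rule inj_on_inverseI [where g = "\<lambda>M b a. M (a, b)"], simp)
  also have "?T (\<lambda>b a. M (a, b)) = M"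
    by (simp add: case_prod_eta)
  finally show "pmf (Pi_pmf (A \<times> B) d p) M = pmf (map_pmf ?T ?columns) M" .
qed

lemma random_array_conv_columns:
  "random_array m n \<alpha> = map_pmf (\<lambda>C (r, c). C c r)
     (Pi_pmf {0..<n} (\<lambda>_. False) (\<lambda>_. Pi_pmf {0..<m} False (\<lambda>_. bernoulli_pmf \<alpha>)))"
  unfolding random_array_def by (rule Pi_pmf_Times_conv_columns) simp_all

lemma measure_Pi_pmf_three_coordinates:
  assumes "finite A" "i \<in> A" "j \<in> A" "k \<in> A" "i \<noteq> j" "i \<noteq> k" "j \<noteq> k"
  shows "measure_pmf.prob (Pi_pmf A d p) {f. (f i, f j, f k) = (a, b, c)}
         = pmf (p i) a * pmf (p j) b * pmf (p k) c"
proof -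
  define B where "B x = (if x = i then {a} else if x = j then {b} else if x = k then {c} else UNIV)" for x
  have "f \<in> Pi A B \<longleftrightarrow> (f i, f j, f k) = (a, b, c)" for f
  proof
    assume "f \<in> Pi A B"
    then have "f i \<in> B i" "f j \<in> B j" "f k \<in> B k"
      using assms(2-4) by auto
    then show "(f i, f j, f k) = (a, b, c)"
      using assms(5-7) by (simp add: B_def)
  qed (auto simp: B_def)
  then have "{f. (f i, f j, f k) = (a, b, c)} = Pi A B"
    by blast
  then have "measure_pmf.prob (Pi_pmf A d p) {f. (f i, f j, f k) = (a, b, c)}
      = (\<Prod>x\<in>A. measure_pmf.prob (p x) (B x))"
    using assms(1) by (simp add: measure_Pi_pmf_Pi)
  also have "\<dots> = (\<Prod>x\<in>{i, j, k}. measure_pmf.prob (p x) (B x))"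
    using assms by (intro prod.mono_neutral_right) (auto simp: B_def)
  also have "\<dots> = pmf (p i) a * pmf (p j) b * pmf (p k) c"
    using assms by (simp add: B_def measure_pmf_single)
  finally show ?thesis .
qed

lemma (in prob_space) exists_less_if_expectation_less:
  fixes f :: "'a \<Rightarrow> real"
  assumes "integrable M f" "expectation f < c"
  shows "\<exists>x\<in>space M. f x < c"
proof (rule ccontr)
  assume "\<not> ?thesis"
  then have "c \<le> expectation f"
    using assms(1) by (intro integral_ge_const AE_I2) (auto simp: not_less)
  with assms(2) show False
    by simp
qed

lemma exp_one_gt_8_div_3: "8 / 3 < exp (1 :: real)"
  using e_approx_32 by (simp add: abs_if split: if_split_asm)

lemma prob_pattern_avoided:
  assumes "i < N" "j < N" "k < N" "i \<noteq> j" "i \<noteq> k" "j \<noteq> k"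
  shows "measure_pmf.prob (random_array N n \<alpha>) {M. \<forall>c<n. (M (i, c), M (j, c), M (k, c)) \<noteq> (a, b, d)}
         = (1 - pmf (bernoulli_pmf \<alpha>) a * pmf (bernoulli_pmf \<alpha>) b * pmf (bernoulli_pmf \<alpha>) d) ^ n"
proof -
  let ?column = "Pi_pmf {0..<N} False (\<lambda>_. bernoulli_pmf \<alpha>)"
  let ?E = "{col. (col i, col j, col k) = (a, b, d)}"
  let ?avoids = "{M. \<forall>c<n. (M (i, c), M (j, c), M (k, c)) \<noteq> (a, b, d)}"
  have "(\<lambda>C (r, c). C c r) -` ?avoids = Pi {0..<n} (\<lambda>_. UNIV - ?E)"
    by auto
  then have "measure_pmf.prob (random_array N n \<alpha>) ?avoids
      = (\<Prod>c\<in>{0..<n}. measure_pmf.prob ?column (UNIV - ?E))"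
    by (simp add: random_array_conv_columns measure_Pi_pmf_Pi)
  also have "\<dots> = (\<Prod>c\<in>{0..<n}. 1 - measure_pmf.prob ?column ?E)"
    using measure_pmf.prob_compl [of ?E ?column] by simp
  moreover have "measure_pmf.prob ?column ?E
      = pmf (bernoulli_pmf \<alpha>) a * pmf (bernoulli_pmf \<alpha>) b * pmf (bernoulli_pmf \<alpha>) d"
    using assms by (intro measure_Pi_pmf_three_coordinates) auto
  ultimately show ?thesis
    by simp
qed

lemma prob_deficient_le:
  assumes "i < N" "j < N" "k < N" "i \<noteq> j" "i \<noteq> k" "j \<noteq> k" "0 \<le> \<alpha>" "\<alpha> \<le> 1"
  shows "measure_pmf.prob (random_array N n \<alpha>) {M. deficient M n i j k} \<le> p_n n \<alpha>"
proof -
  let ?P = "random_array N n \<alpha>"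
  let ?avoids = "\<lambda>v. {M. \<forall>c<n. (M (i, c), M (j, c), M (k, c)) \<noteq> v}"
  have "{M. deficient M n i j k} = (\<Union>v\<in>vecA. ?avoids v)"
    by (auto simp: deficient_def)
  then have "measure_pmf.prob ?P {M. deficient M n i j k} = measure_pmf.prob ?P (\<Union>v\<in>vecA. ?avoids v)"
    by (simp only:)
  also have "\<dots> \<le> (\<Sum>v\<in>vecA. measure_pmf.prob ?P (?avoids v))"
    by (rule measure_pmf.finite_measure_subadditive_finite) (auto simp: vecA_def)
  also have "\<dots> = (\<Sum>(a, b, d)\<in>vecA.
      (1 - pmf (bernoulli_pmf \<alpha>) a * pmf (bernoulli_pmf \<alpha>) b * pmf (bernoulli_pmf \<alpha>) d) ^ n)"
    using prob_pattern_avoided [OF assms(1-6)] by (intro sum.cong) auto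
  also have "\<dots> = p_n n \<alpha>"
    using assms by (simp add: vecA_def p_n_def algebra_simps power2_eq_square power3_eq_cube)
  finally show ?thesis .
qed

definition increasing_triples :: "nat \<Rightarrow> (nat \<times> nat \<times> nat) set" where
  "increasing_triples N = {(i, j, k). i < j \<and> j < k \<and> k < N}"

lemma increasing_triples_subset: "increasing_triples N \<subseteq> {..<N} \<times> {..<N} \<times> {..<N}"
  by (auto simp: increasing_triples_def)

lemma finite_increasing_triples [simp]: "finite (increasing_triples N)"
  using increasing_triples_subset by (rule finite_subset) auto

lemma card_increasing_triples_le: "2 * card (increasing_triples N) \<le> N ^ 3"
proof -
  let ?T = "increasing_triples N"
  let ?swap = "\<lambda>(i :: nat, j :: nat, k :: nat). (j, i, k)"
  have "inj_on ?swap ?T"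
    by (auto simp: inj_on_def)
  then have "2 * card ?T = card ?T + card (?swap ` ?T)"
    by (simp add: card_image)
  also have "\<dots> = card (?T \<union> ?swap ` ?T)"
    by (rule card_Un_disjoint [symmetric]) (simp_all, auto simp: increasing_triples_def)
  also have "\<dots> \<le> card ({..<N} \<times> {..<N} \<times> {..<N})"
    using increasing_triples_subset by (intro card_mono) auto
  also have "\<dots> = N ^ 3"
    by (simp add: card_cartesian_product power3_eq_cube)
  finally show ?thesis .
qed

lemma num_deficient_eq_sum_indicator:
  "real (num_deficient M N n)
     = (\<Sum>(i, j, k)\<in>increasing_triples N. indicator {M. deficient M n i j k} M)"
proof -
  have "deficient_sets M N n = {(i, j, k) \<in> increasing_triples N. deficient M n i j k}"
    by (auto simp: deficient_sets_def increasing_triples_def)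
  then show ?thesis
    by (simp add: num_deficient_def sum.inter_filter [symmetric] indicator_def case_prod_unfold Int_def)
qed

lemma integrable_num_deficient:
  "integrable (random_array N n \<alpha>) (\<lambda>M. real (num_deficient M N n))"
  unfolding num_deficient_eq_sum_indicator case_prod_unfold
  by (intro Bochner_Integration.integrable_sum integrable_real_indicator)
     (simp_all add: measure_pmf.emeasure_finite less_top [symmetric])

lemma expectation_num_deficient_le:
  assumes "0 \<le> \<alpha>" "\<alpha> \<le> 1"
  shows "measure_pmf.expectation (random_array N n \<alpha>) (\<lambda>M. real (num_deficient M N n))
         \<le> card (increasing_triples N) * p_n n \<alpha>"
proof -
  let ?P = "random_array N n \<alpha>"
  have "measure_pmf.expectation ?P (\<lambda>M. real (num_deficient M N n))
      = (\<Sum>(i, j, k)\<in>increasing_triples N. measure_pmf.prob ?P {M. deficient M n i j k})"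
    unfolding num_deficient_eq_sum_indicator case_prod_unfold
    by (subst Bochner_Integration.integral_sum)
       (simp_all add: integrable_real_indicator measure_pmf.emeasure_finite less_top [symmetric])
  also have "\<dots> \<le> (\<Sum>t\<in>increasing_triples N. p_n n \<alpha>)"
    using assms by (intro sum_mono) (auto simp: increasing_triples_def intro: prob_deficient_le)
  finally show ?thesis
    by simp
qed

lemma finite_deficient_sets: "finite (deficient_sets M N n)"
  by (rule finite_subset [OF _ finite_increasing_triples])
     (auto simp: deficient_sets_def increasing_triples_def)

lemma num_deficient_eq_0_iff: "num_deficient M m n = 0 \<longleftrightarrow> is_PCA M m n"
  using finite_deficient_sets
  by (auto simp: num_deficient_def deficient_sets_def is_PCA_def)

lemma is_PCA_if_num_deficient_le:
  assumes "num_deficient M N n + m \<le> N"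
  shows "\<exists>M'. is_PCA M' m n"
proof -
  define S where "S = (\<lambda>(i, j, k). k) ` deficient_sets M N n"
  have "card S \<le> num_deficient M N n"
    unfolding S_def num_deficient_def by (rule card_image_le [OF finite_deficient_sets])
  then have "m \<le> card {0..<N} - card S"
    using assms by simp
  also have "\<dots> \<le> card ({0..<N} - S)"
    by (rule diff_card_le_card_Diff) (simp add: S_def finite_deficient_sets)
  finally obtain R where R: "R \<subseteq> {0..<N} - S" "card R = m"
    by (meson obtain_subset_with_card_n)
  then have "finite R"
    by (meson finite_Diff finite_atLeastLessThan finite_subset)
  define rows where "rows = sorted_list_of_set R"
  have rows: "sorted_wrt (<) rows" "set rows = R" "length rows = m"
    using \<open>finite R\<close> R(2) by (simp_all add: rows_def)
  have "is_PCA (\<lambda>(r, c). M (rows ! r, c)) m n"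
    unfolding is_PCA_def
  proof (intro allI impI)
    fix i j k
    assume ijk: "i < j \<and> j < k \<and> k < m"
    then have increasing: "rows ! i < rows ! j" "rows ! j < rows ! k"
      using rows(1,3) sorted_wrt_nth_less [of "(<)" rows] by auto
    have kept: "rows ! k \<in> {0..<N} - S"
      using ijk rows(2,3) R(1) nth_mem by blast
    then have "(rows ! i, rows ! j, rows ! k) \<notin> deficient_sets M N n"
      by (force simp: S_def)
    with increasing kept show "\<not> deficient (\<lambda>(r, c). M (rows ! r, c)) n i j k"
      by (auto simp: deficient_sets_def deficient_def)
  qed
  then show ?thesis
    by blast
qed

lemma prob_is_PCA_pos:
  assumes "0 < \<alpha>" "\<alpha> < 1" "is_PCA M m n"
  shows "measure_pmf.prob (random_array m n \<alpha>) {M. is_PCA M m n} > 0"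
proof -
  let ?P = "random_array m n \<alpha>"
  define M\<^sub>0 where "M\<^sub>0 x = (x \<in> {0..<m} \<times> {0..<n} \<and> M x)" for x
  have "deficient M\<^sub>0 n i j k \<longleftrightarrow> deficient M n i j k" if "i < m" "j < m" "k < m" for i j k
    using that by (auto simp: deficient_def M\<^sub>0_def)
  then have "is_PCA M\<^sub>0 m n"
    using assms(3) by (auto simp: is_PCA_def)
  have "0 < pmf (bernoulli_pmf \<alpha>) b" for b
    using assms(1,2) by (cases b) auto
  then have "0 < (\<Prod>x\<in>{0..<m} \<times> {0..<n}. pmf (bernoulli_pmf \<alpha>) (M\<^sub>0 x))"
    by (intro prod_pos) auto
  also have "\<dots> = pmf ?P M\<^sub>0"
    unfolding random_array_def by (subst pmf_Pi) (auto simp: M\<^sub>0_def)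
  also have "\<dots> = measure_pmf.prob ?P {M\<^sub>0}"
    by (simp add: measure_pmf_single)
  also have "\<dots> \<le> measure_pmf.prob ?P {M. is_PCA M m n}"
    using \<open>is_PCA M\<^sub>0 m n\<close> by (intro measure_pmf.finite_measure_mono) auto
  finally show ?thesis .
qed

lemma p_n_pos:
  assumes "0 < \<alpha>" "\<alpha> < 1"
  shows "0 < p_n n \<alpha>"
proof -
  have "\<alpha> ^ 3 < 1"
    using assms by (simp add: power_less_one_iff)
  moreover have "\<alpha> ^ 2 * (1 - \<alpha>) \<le> 1"
    using assms by (intro mult_le_one) (auto simp: power_le_one)
  ultimately show ?thesis
    by (simp add: p_n_def add_pos_nonneg)
qed

lemma square_mult_p_n_le_if_le_zeta:
  assumes "0 < p_n n \<alpha>" "real m \<le> zeta n \<alpha>"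
  shows "real m ^ 2 * p_n n \<alpha> \<le> 2 / (3 * exp 1)"
proof -
  have "zeta n \<alpha> = sqrt (2 / (3 * exp 1) / p_n n \<alpha>)"
    using assms(1) by (simp add: zeta_def powr_half_sqrt real_sqrt_mult [symmetric])
  with assms(2) have "real m ^ 2 \<le> (sqrt (2 / (3 * exp 1) / p_n n \<alpha>)) ^ 2"
    by (intro power_mono) auto
  also have "\<dots> = 2 / (3 * exp 1) / p_n n \<alpha>"
    using assms(1) by simp
  finally show ?thesis
    using assms(1) by (simp add: pos_le_divide_eq mult_ac)
qed

lemma card_increasing_triples_mult_less:
  fixes p :: real
  assumes "0 < m" "0 \<le> p" "real m ^ 2 * p \<le> 2 / (3 * exp 1)"
  shows "card (increasing_triples (2 * m)) * p < m"
proof -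
  have "real (2 * card (increasing_triples (2 * m))) \<le> real ((2 * m) ^ 3)"
    using card_increasing_triples_le [of "2 * m"] by linarith
  then have "card (increasing_triples (2 * m)) * p \<le> 4 * real m ^ 3 * p"
    using assms(2) by (intro mult_right_mono) auto
  also have "\<dots> = 4 * real m * (real m ^ 2 * p)"
    by (simp add: power2_eq_square power3_eq_cube)
  also have "\<dots> \<le> 4 * real m * (2 / (3 * exp 1))"
    using assms(3) by (intro mult_left_mono) auto
  also have "\<dots> < real m"
    using exp_one_gt_8_div_3 assms(1) by (simp add: field_simps)
  finally show ?thesis .
qed

theorem theorem2:
  fixes n m :: nat and \<alpha> :: real
  assumes "n > 0" and "m > 0" and "0 < \<alpha>" and "\<alpha> < 1"
    and "real m \<le> zeta n \<alpha>"
  shows "measure_pmf.prob (random_array m n \<alpha>) {M. num_deficient M m n = 0} > 0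
         \<and> (\<exists>M. is_PCA M m n)"
proof -
  let ?X = "\<lambda>M. real (num_deficient M (2 * m) n)"
  have p_pos: "0 < p_n n \<alpha>"
    using assms(3,4) by (rule p_n_pos)
  have "real m ^ 2 * p_n n \<alpha> \<le> 2 / (3 * exp 1)"
    using p_pos assms(5) by (rule square_mult_p_n_le_if_le_zeta)
  then have "card (increasing_triples (2 * m)) * p_n n \<alpha> < m"
    using assms(2) p_pos by (intro card_increasing_triples_mult_less) auto
  then have "measure_pmf.expectation (random_array (2 * m) n \<alpha>) ?X < m"
    using expectation_num_deficient_le [of \<alpha> "2 * m" n] assms(3,4) by linarith
  then obtain M where "num_deficient M (2 * m) n < m"
    using measure_pmf.exists_less_if_expectation_less [OF integrable_num_deficient] of_nat_less_iff
    by blast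
  then obtain M' where "is_PCA M' m n"
    using is_PCA_if_num_deficient_le [of M "2 * m" n m] by auto
  then show ?thesis
    using prob_is_PCA_pos [OF assms(3,4)] num_deficient_eq_0_iff by auto
qed

end
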